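(* Let $(V,o)$ be a normal surface singularity with $p_f(V,o)>0$ and $Z^2=-2$, and let $\pi\colon X\to V$ be the minimal resolution. Assume that the fundamental cycle $Z$ is essentially irreducible and that $D_m=Z_{min}$, where $D_m$ is the smallest term of the Yau sequence for $Z$. Then $(V,o)$ is numerically Gorenstein and its canonical cycle is $Z_K=p_f(V,o)\,Y$, where $Y$ is the Yau cycle.
   Context: Let $\pi^{-1}(o)=\bigcup_{i=1}^n E_i$ be the decomposition of the exceptional set into irreducible components. A cycle is a divisor $D=\sum d_iE_i$ with $d_i\in\mathbb Z$; $D_1\le D_2$ means coefficientwise inequality, $D_1<D_2$ means $D_1\le D_2$ and $D_1\ne D_2$; $\mathrm{supp}\,D$ is the union of the $E_i$ with $d_i\neq0$. $K=K_X$ is the canonical divisor of $X$, and for a cycle $D>0$ its arithmetic genus is $p_a(D)=1+\frac12(D^2+D\cdot K)$. The fundamental cycle $Z$ is the smallest cycle $D>0$ with support $\pi^{-1}(o)$ such that $D\cdot E_i\le0$ for all $i$; $p_f(V,o)=p_a(Z)$ is the fundamental genus and $-Z^2$ the degree. For cycles $C$ and $D>0$, "$\mathcal O_D(-C)$ is numerically trivial" means $C\cdot E=0$ for every irreducible component $E\le D$. When $p_f(V,o)>0$, $Z_{min}$ denotes the unique minimal cycle $0<Z_{min}\le Z$ with $p_a(Z_{min})=p_a(Z)$. Yau sequence: if $D$ is a cycle that is the fundamental cycle on its own support, with $Z_{min}\le D$, $p_a(D)=p_f(V,o)$ and $D\cdot E=0$ for every component $E\le Z_{min}$, its Tyurina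 component is the unique maximal cycle $0<D'<D$ such that $\mathcal O_{D'}(-D)$ is numerically trivial and $p_a(D')=p_a(D)$ (it is again the fundamental cycle on its support). Put $D_1=Z$ and let $D_{i+1}$ be the Tyurina component of $D_i$ as long as $D_i\cdot E=0$ for all components $E\le Z_{min}$; the process stops at the first $D_m$ with $D_m\cdot Z_{min}<0$ ($m=1$ if $Z\cdot Z_{min}<0$). The sequence $0<D_m<\dots<D_1=Z$ is the Yau sequence, $m$ its length, and $Y=\sum_{i=1}^mD_i$ the Yau cycle. A $(-2)$-curve is an irreducible exceptional curve $E$ which is a smooth rational curve with $E^2=-2$. $Z$ is essentially irreducible if there is an irreducible component $A\le Z$ which is not a $(-2)$-curve such that, with $k$ the coefficient of $A$ in $Z$, either $Z=kA$ or every irreducible component of $Z-kA$ is a $(-2)$-curve. The canonical cycle $Z_K$ is the cycle with rational coefficients supported on $\pi^{-1}(o)$ satisfying $Z_K\cdot E_i=-K\cdot E_i$ for all $i$; $(V,o)$ is numerically Gorenstein if $Z_K$ has integer coefficients. *)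

theory Defs
  imports Complex_Main
begin

text \<open>Combinatorial model of the exceptional set of a resolution of a normal surface
singularity: the irreducible components are indexed by a finite type 'i;
M i j = E_i . E_j is the intersection matrix; g i is the arithmetic genus of E_i.\<close>

type_synonym 'i cycle = "'i \<Rightarrow> int"

definition zc :: "'i cycle" where
  "zc = (\<lambda>_. 0)"

definition E :: "'i \<Rightarrow> 'i cycle" where
  "E i = (\<lambda>j. if j = i then 1 else 0)"

definition inter :: "('i::finite \<Rightarrow> 'i \<Rightarrow> int) \<Rightarrow> 'i cycle \<Rightarrow> 'i cycle \<Rightarrow> int" where
  "inter M C D = (\<Sum>i\<in>UNIV. \<Sum>j\<in>UNIV. C i * D j * M i j)"

text \<open>K . E_i by adjunction: 2 p_a(E_i) - 2 = E_i^2 + K . E_i.\<close>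
definition canon :: "('i \<Rightarrow> 'i \<Rightarrow> int) \<Rightarrow> ('i \<Rightarrow> nat) \<Rightarrow> 'i \<Rightarrow> int" where
  "canon M g i = 2 * int (g i) - 2 - M i i"

definition Kdot :: "('i::finite \<Rightarrow> 'i \<Rightarrow> int) \<Rightarrow> ('i \<Rightarrow> nat) \<Rightarrow> 'i cycle \<Rightarrow> int" where
  "Kdot M g D = (\<Sum>i\<in>UNIV. D i * canon M g i)"

text \<open>Arithmetic genus; D^2 + K.D is always even, so the division is exact.\<close>
definition pa :: "('i::finite \<Rightarrow> 'i \<Rightarrow> int) \<Rightarrow> ('i \<Rightarrow> nat) \<Rightarrow> 'i cycle \<Rightarrow> int" where
  "pa M g D = 1 + (inter M D D + Kdot M g D) div 2"

definition supp :: "'i cycle \<Rightarrow> 'i set" where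
  "supp D = {i. D i \<noteq> 0}"

definition exc_config :: "('i::finite \<Rightarrow> 'i \<Rightarrow> int) \<Rightarrow> bool" where
  "exc_config M \<longleftrightarrow>
     (\<forall>i j. M i j = M j i) \<and>
     (\<forall>i j. i \<noteq> j \<longrightarrow> 0 \<le> M i j) \<and>
     (\<forall>D. D \<noteq> zc \<longrightarrow> inter M D D < 0) \<and>
     (\<forall>S. S \<noteq> {} \<and> S \<noteq> UNIV \<longrightarrow> (\<exists>i\<in>S. \<exists>j. j \<notin> S \<and> M i j \<noteq> 0))"

definition minimal_resolution :: "('i \<Rightarrow> 'i \<Rightarrow> int) \<Rightarrow> ('i \<Rightarrow> nat) \<Rightarrow> bool" where
  "minimal_resolution M g \<longleftrightarrow> (\<forall>i. \<not> (g i = 0 \<and> M i i = -1))"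

definition minus2_curve :: "('i \<Rightarrow> 'i \<Rightarrow> int) \<Rightarrow> ('i \<Rightarrow> nat) \<Rightarrow> 'i \<Rightarrow> bool" where
  "minus2_curve M g i \<longleftrightarrow> g i = 0 \<and> M i i = -2"

definition is_fund_on :: "('i::finite \<Rightarrow> 'i \<Rightarrow> int) \<Rightarrow> 'i set \<Rightarrow> 'i cycle \<Rightarrow> bool" where
  "is_fund_on M S D \<longleftrightarrow>
     zc < D \<and> supp D = S \<and> (\<forall>i\<in>S. inter M D (E i) \<le> 0) \<and>
     (\<forall>D'. zc < D' \<and> supp D' = S \<and> (\<forall>i\<in>S. inter M D' (E i) \<le> 0) \<longrightarrow> D \<le> D')"

definition fund_cycle :: "('i::finite \<Rightarrow> 'i \<Rightarrow> int) \<Rightarrow> 'i cycle" where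
  "fund_cycle M = (THE D. is_fund_on M UNIV D)"

definition is_min_genus_cycle :: "('i::finite \<Rightarrow> 'i \<Rightarrow> int) \<Rightarrow> ('i \<Rightarrow> nat) \<Rightarrow> 'i cycle \<Rightarrow> bool" where
  "is_min_genus_cycle M g D \<longleftrightarrow>
     zc < D \<and> D \<le> fund_cycle M \<and> pa M g D = pa M g (fund_cycle M) \<and>
     (\<forall>D'. zc < D' \<and> D' \<le> D \<and> pa M g D' = pa M g (fund_cycle M) \<longrightarrow> D' = D)"

definition Zmin :: "('i::finite \<Rightarrow> 'i \<Rightarrow> int) \<Rightarrow> ('i \<Rightarrow> nat) \<Rightarrow> 'i cycle" where
  "Zmin M g = (THE D. is_min_genus_cycle M g D)"

text \<open>O_D(-C) numerically trivial: C . E = 0 for every component E \<le> D.\<close>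
definition num_trivial :: "('i::finite \<Rightarrow> 'i \<Rightarrow> int) \<Rightarrow> 'i cycle \<Rightarrow> 'i cycle \<Rightarrow> bool" where
  "num_trivial M C D \<longleftrightarrow> (\<forall>i\<in>supp D. inter M C (E i) = 0)"

definition is_tyurina :: "('i::finite \<Rightarrow> 'i \<Rightarrow> int) \<Rightarrow> ('i \<Rightarrow> nat) \<Rightarrow> 'i cycle \<Rightarrow> 'i cycle \<Rightarrow> bool" where
  "is_tyurina M g D D' \<longleftrightarrow>
     zc < D' \<and> D' < D \<and> num_trivial M D D' \<and> pa M g D' = pa M g D \<and>
     (\<forall>D''. zc < D'' \<and> D'' < D \<and> num_trivial M D D'' \<and> pa M g D'' = pa M g D \<longrightarrow> D'' \<le> D')"

definition is_yau_seq :: "('i::finite \<Rightarrow> 'i \<Rightarrow> int) \<Rightarrow> ('i \<Rightarrow> nat) \<Rightarrow> 'i cycle list \<Rightarrow> bool" where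
  "is_yau_seq M g ds \<longleftrightarrow>
     ds \<noteq> [] \<and> ds ! 0 = fund_cycle M \<and>
     (\<forall>k. Suc k < length ds \<longrightarrow>
        num_trivial M (ds ! k) (Zmin M g) \<and> is_tyurina M g (ds ! k) (ds ! Suc k)) \<and>
     inter M (last ds) (Zmin M g) < 0"

definition yau_cycle :: "'i cycle list \<Rightarrow> 'i cycle" where
  "yau_cycle ds = (\<lambda>i. (\<Sum>D\<leftarrow>ds. D i))"

definition ess_irreducible :: "('i \<Rightarrow> 'i \<Rightarrow> int) \<Rightarrow> ('i \<Rightarrow> nat) \<Rightarrow> 'i cycle \<Rightarrow> bool" where
  "ess_irreducible M g Z \<longleftrightarrow>
     (\<exists>A. Z A \<noteq> 0 \<and> \<not> minus2_curve M g A \<and>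
        (Z = (\<lambda>j. Z A * E A j) \<or>
         (\<forall>j\<in>supp (\<lambda>j. Z j - Z A * E A j). minus2_curve M g j)))"

definition is_canonical_cycle :: "('i::finite \<Rightarrow> 'i \<Rightarrow> int) \<Rightarrow> ('i \<Rightarrow> nat) \<Rightarrow> ('i \<Rightarrow> rat) \<Rightarrow> bool" where
  "is_canonical_cycle M g ZK \<longleftrightarrow>
     (\<forall>i. (\<Sum>j\<in>UNIV. ZK j * of_int (M j i)) = - of_int (canon M g i))"

definition canonical_cycle :: "('i::finite \<Rightarrow> 'i \<Rightarrow> int) \<Rightarrow> ('i \<Rightarrow> nat) \<Rightarrow> 'i \<Rightarrow> rat" where
  "canonical_cycle M g = (THE ZK. is_canonical_cycle M g ZK)"

definition numerically_gorenstein :: "('i::finite \<Rightarrow> 'i \<Rightarrow> int) \<Rightarrow> ('i \<Rightarrow> nat) \<Rightarrow> bool" where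
  "numerically_gorenstein M g \<longleftrightarrow> (\<forall>i. canonical_cycle M g i \<in> \<int>)"

end

theory Submission
  imports Defs "HOL-Analysis.Cartesian_Space"
begin

text \<open>All components other than \<open>A\<close> are \<open>(-2)\<close>-curves, so \<open>K\<cdot>D = D(A) (K\<cdot>E\<^sub>A)\<close> and the genus of
  a cycle is governed by \<open>D\<^sup>2\<close> and \<open>D(A)\<close>; in particular every cycle of genus \<open>p = p\<^sub>f\<close>
  contains \<open>A\<close>. The terms of the Yau sequence are mutually orthogonal cycles of genus \<open>p\<close>,
  and all but the last one are orthogonal to \<open>E\<^sub>A\<close>; hence \<open>Y\<cdot>Z = Z\<^sup>2 = -2\<close> and
  \<open>Y\<cdot>E\<^sub>A = Z\<^sub>m\<^sub>i\<^sub>n\<cdot>E\<^sub>A\<close>, and comparing \<open>Z\<^sub>m\<^sub>i\<^sub>n\<^sup>2\<close> with the genus formula gives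
  \<open>Z(A) (Z\<^sub>m\<^sub>i\<^sub>n\<cdot>E\<^sub>A) = -2\<close>. The heart of the proof is \<open>Y\<cdot>E\<^sub>j \<ge> 0\<close> for every \<open>(-2)\<close>-curve
  \<open>E\<^sub>j\<close>, obtained by following \<open>E\<^sub>j\<close> down the Yau sequence and using the maximality of
  Tyurina components. Then \<open>-2 = Z\<cdot>Y = Z(A) (Y\<cdot>E\<^sub>A) + \<Sum>\<^sub>j\<^sub>\<noteq>\<^sub>A Z(j) (Y\<cdot>E\<^sub>j)\<close> forces
  \<open>Y\<cdot>E\<^sub>j = 0\<close> for \<open>j \<noteq> A\<close>, and \<open>2p = Z(A) (K\<cdot>E\<^sub>A)\<close> gives \<open>p (Y\<cdot>E\<^sub>A) = -K\<cdot>E\<^sub>A\<close>. Thus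
  \<open>p Y\<close> solves the equations defining \<open>Z\<^sub>K\<close>, whose solution is unique because the
  intersection form is nondegenerate.\<close>

section \<open>The intersection form and the arithmetic genus\<close>

lemma inter_add_left: "inter M (\<lambda>x. C x + D x) X = inter M C X + inter M D X"
  unfolding inter_def by (simp add: distrib_right sum.distrib)

lemma inter_add_right: "inter M X (\<lambda>x. C x + D x) = inter M X C + inter M X D"
  unfolding inter_def by (simp add: distrib_right distrib_left sum.distrib)

lemma inter_diff_left: "inter M (\<lambda>x. C x - D x) X = inter M C X - inter M D X"
  unfolding inter_def by (simp add: left_diff_distrib sum_subtractf)

lemma inter_diff_right: "inter M X (\<lambda>x. C x - D x) = inter M X C - inter M X D"
  unfolding inter_def by (simp add: left_diff_distrib right_diff_distrib sum_subtractf)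

lemma inter_sum_left:
  assumes "finite K"
  shows "inter M (\<lambda>x. \<Sum>k\<in>K. C k x) X = (\<Sum>k\<in>K. inter M (C k) X)"
  using assms
proof (induction K rule: finite_induct)
  case empty
  then show ?case by (simp add: inter_def)
next
  case (insert a K)
  then show ?case by (simp add: inter_add_left)
qed

lemma inter_E_right: "inter M D (E i) = (\<Sum>j\<in>UNIV. D j * M j i)"
  unfolding inter_def E_def by (simp add: if_distrib if_distribR sum.delta cong: if_cong)

lemma inter_E_E: "inter M (E i) (E j) = M i j"
proof -
  have "\<And>a. E i a * M a j = (if a = i then M i j else 0)" unfolding E_def by auto
  then show ?thesis unfolding inter_E_right by simp
qed

lemma Kdot_add: "Kdot M g (\<lambda>x. C x + D x) = Kdot M g C + Kdot M g D"
  unfolding Kdot_def by (simp add: distrib_right sum.distrib)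

lemma Kdot_E: "Kdot M g (E i) = canon M g i"
proof -
  have "\<And>a. E i a * canon M g a = (if a = i then canon M g i else 0)" unfolding E_def by auto
  then show ?thesis unfolding Kdot_def by simp
qed

lemma even_double_sum_minus_diagonal:
  fixes f :: "'a \<Rightarrow> 'a \<Rightarrow> int"
  assumes "\<And>i j. f i j = f j i" and "finite S"
  shows "even ((\<Sum>i\<in>S. \<Sum>j\<in>S. f i j) - (\<Sum>i\<in>S. f i i))"
  using assms(2)
proof (induction S rule: finite_induct)
  case empty
  then show ?case by simp
next
  case (insert x S)
  have "(\<Sum>i\<in>S. \<Sum>j\<in>insert x S. f i j) = (\<Sum>i\<in>S. f x i) + (\<Sum>i\<in>S. \<Sum>j\<in>S. f i j)"
    using insert.hyps by (simp add: sum.distrib assms(1)[of _ x])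
  then have "(\<Sum>i\<in>insert x S. \<Sum>j\<in>insert x S. f i j) - (\<Sum>i\<in>insert x S. f i i)
      = 2 * (\<Sum>j\<in>S. f x j) + ((\<Sum>i\<in>S. \<Sum>j\<in>S. f i j) - (\<Sum>i\<in>S. f i i))"
    using insert.hyps by simp
  then show ?case using insert.IH by simp
qed

locale symmetric_intersection =
  fixes M :: "'i::finite \<Rightarrow> 'i \<Rightarrow> int"
  assumes M_sym: "M i j = M j i"
begin

lemma inter_commute: "inter M C D = inter M D C"
  unfolding inter_def by (subst sum.swap) (simp add: M_sym mult.commute mult.left_commute)

lemma inter_eq_sum_inter_E:
  "inter M C D = (\<Sum>i\<in>UNIV. C i * inter M D (E i))"
  unfolding inter_E_right unfolding inter_def by (simp add: sum_distrib_left mult.assoc M_sym)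

lemma even_inter_self_Kdot: "even (inter M D D + Kdot M g D)"
proof -
  let ?f = "\<lambda>i j. D i * D j * M i j"
  have off: "even ((\<Sum>i\<in>UNIV. \<Sum>j\<in>UNIV. ?f i j) - (\<Sum>i\<in>UNIV. ?f i i))"
    by (rule even_double_sum_minus_diagonal) (simp_all add: M_sym mult.commute)
  have "?f i i + D i * canon M g i = (D i * (D i - 1)) * M i i + 2 * (D i * (int (g i) - 1))" for i
    unfolding canon_def by (simp add: algebra_simps)
  then have diag: "even (\<Sum>i\<in>UNIV. ?f i i + D i * canon M g i)"
    by (intro dvd_sum) simp
  have "inter M D D + Kdot M g D
      = ((\<Sum>i\<in>UNIV. \<Sum>j\<in>UNIV. ?f i j) - (\<Sum>i\<in>UNIV. ?f i i)) + (\<Sum>i\<in>UNIV. ?f i i + D i * canon M g i)"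
    unfolding inter_def Kdot_def by (simp add: sum.distrib)
  then show ?thesis using off diag by simp
qed

lemma pa_double: "2 * pa M g D = 2 + inter M D D + Kdot M g D"
  using even_inter_self_Kdot[where D=D and g=g] unfolding pa_def by auto

lemma pa_add:
  "pa M g (\<lambda>x. C x + D x) = pa M g C + pa M g D + inter M C D - 1"
proof -
  have "2 * pa M g (\<lambda>x. C x + D x) = 2 * (pa M g C + pa M g D + inter M C D - 1)"
    using pa_double[where g=g] inter_commute[where C=D and D=C]
    by (simp add: inter_add_left inter_add_right Kdot_add)
  then show ?thesis by simp
qed

lemma pa_E: "pa M g (E i) = int (g i)"
  using pa_double[where g=g and D="E i"] unfolding inter_E_E Kdot_E canon_def by simp

lemma pa_add_E:
  "pa M g (\<lambda>x. D x + E i x) = pa M g D + int (g i) + inter M D (E i) - 1"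
  using pa_add[where g=g and C=D and D="E i"] pa_E[where g=g and i=i] by simp

end

lemma zc_le_iff: "zc \<le> D \<longleftrightarrow> (\<forall>i. 0 \<le> D i)"
  unfolding zc_def le_fun_def by simp

lemma zc_less_iff: "zc < D \<longleftrightarrow> (\<forall>i. 0 \<le> D i) \<and> (\<exists>i. D i \<noteq> 0)"
  unfolding less_le zc_le_iff by (auto simp: zc_def fun_eq_iff)

lemma zc_less_nonneg: "zc < D \<Longrightarrow> 0 \<le> D i"
  by (simp add: zc_less_iff)

lemma zc_lessI: "(\<And>x. 0 \<le> D x) \<Longrightarrow> 0 < D i \<Longrightarrow> zc < D"
  unfolding zc_less_iff by (metis less_irrefl)

lemma E_nonneg: "0 \<le> E i x"
  by (simp add: E_def)

lemma sum_E: "(\<Sum>x\<in>UNIV. E (i :: 'i::finite) x) = 1"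
  by (simp add: E_def)

lemma zc_less_add_E: "zc \<le> D \<Longrightarrow> zc < (\<lambda>x. D x + E i x)"
  by (rule zc_lessI[of _ i]) (auto simp: zc_le_iff E_def add_nonneg_nonneg add_nonneg_pos)

lemma le_add_E_iff: "(\<lambda>x. D x + E i x) \<le> F \<longleftrightarrow> D \<le> F \<and> D i < F i"
proof
  assume le: "(\<lambda>x. D x + E i x) \<le> F"
  have "D x \<le> F x" for x
    using le_funD[OF le, of x] E_nonneg[of i x] by linarith
  moreover have "D i < F i"
    using le_funD[OF le, of i] by (simp add: E_def)
  ultimately show "D \<le> F \<and> D i < F i" by (simp add: le_fun_def)
next
  assume "D \<le> F \<and> D i < F i"
  then show "(\<lambda>x. D x + E i x) \<le> F" by (auto simp: le_fun_def E_def)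
qed

lemma tyurina_add_E_genus:
  assumes "is_tyurina M g D D'" and "(\<lambda>x. D' x + E i x) < D" and "inter M D (E i) = 0"
  shows "pa M g (\<lambda>x. D' x + E i x) \<noteq> pa M g D"
proof
  let ?D'' = "\<lambda>x. D' x + E i x"
  assume genus: "pa M g ?D'' = pa M g D"
  have D': "zc < D'" "num_trivial M D D'"
    and max: "\<And>D''. zc < D'' \<Longrightarrow> D'' < D \<Longrightarrow> num_trivial M D D'' \<Longrightarrow> pa M g D'' = pa M g D \<Longrightarrow> D'' \<le> D'"
    using assms(1) unfolding is_tyurina_def by auto
  have "num_trivial M D ?D''"
    unfolding num_trivial_def
  proof
    fix x assume "x \<in> supp ?D''"
    then have "x = i \<or> x \<in> supp D'" by (cases "x = i") (simp_all add: supp_def E_def)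
    then show "inter M D (E x) = 0" using assms(3) D'(2) unfolding num_trivial_def by blast
  qed
  then have "?D'' \<le> D'" using max[OF zc_less_add_E assms(2) _ genus] D'(1) by simp
  then show False by (simp add: le_add_E_iff)
qed

definition anti_nef :: "('i::finite \<Rightarrow> 'i \<Rightarrow> int) \<Rightarrow> 'i cycle \<Rightarrow> bool" where
  "anti_nef M D \<longleftrightarrow> (\<forall>i. inter M D (E i) \<le> 0)"

section \<open>Negative definite configurations\<close>

lemma rat_vector_common_denominator:
  fixes X :: "'i::finite \<Rightarrow> rat"
  obtains N :: int and W :: "'i \<Rightarrow> int" where "0 < N" and "\<And>j. of_int (W j) = of_int N * X j"
proof
  define d where "d j = snd (quotient_of (X j))" for j
  define n where "n j = fst (quotient_of (X j))" for j
  have d_pos: "0 < d j" for j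
    unfolding d_def by (metis quotient_of_denom_pos surjective_pairing)
  have X_eq: "X j = of_int (n j) / of_int (d j)" for j
    unfolding n_def d_def by (metis quotient_of_div surjective_pairing)
  show "0 < (\<Prod>j\<in>UNIV. d j)" using d_pos by (simp add: prod_pos)
  fix j
  have "(\<Prod>j\<in>UNIV. d j) = d j * (\<Prod>i\<in>UNIV - {j}. d i)" by (simp add: prod.remove)
  then have "(of_int (\<Prod>j\<in>UNIV. d j) :: rat) * X j
      = of_int (d j) * of_int (\<Prod>i\<in>UNIV - {j}. d i) * (of_int (n j) / of_int (d j))"
    by (simp add: X_eq)
  also have "\<dots> = of_int (n j * (\<Prod>i\<in>UNIV - {j}. d i))"
    using d_pos[of j] by simp
  finally show "of_int (n j * (\<Prod>i\<in>UNIV - {j}. d i)) = of_int (\<Prod>j\<in>UNIV. d j) * X j" ..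
qed

locale exceptional_set =
  fixes M :: "'i::finite \<Rightarrow> 'i \<Rightarrow> int"
  assumes exc_config: "exc_config M"
begin

lemma M_offdiag_nonneg: "i \<noteq> j \<Longrightarrow> 0 \<le> M i j"
  and inter_self_neg: "D \<noteq> zc \<Longrightarrow> inter M D D < 0"
  and connected: "S \<noteq> {} \<Longrightarrow> S \<noteq> UNIV \<Longrightarrow> \<exists>i\<in>S. \<exists>j. j \<notin> S \<and> M i j \<noteq> 0"
  using exc_config unfolding exc_config_def by (elim conjE; simp)+

sublocale symmetric_intersection
proof
  show "M i j = M j i" for i j
    using exc_config unfolding exc_config_def by (elim conjE) simp
qed

lemma M_diag_neg: "M i i < 0"
proof -
  have "E i \<noteq> zc" by (auto simp: E_def zc_def fun_eq_iff)
  then have "inter M (E i) (E i) < 0" by (rule inter_self_neg)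
  then show ?thesis by (simp add: inter_E_E)
qed

lemma inter_E_nonneg_outside_supp:
  assumes "zc \<le> W" and "W i = 0"
  shows "0 \<le> inter M W (E i)"
  unfolding inter_E_right
proof (rule sum_nonneg)
  fix j
  show "0 \<le> W j * M j i"
    using assms M_offdiag_nonneg[of j i] by (cases "j = i") (simp_all add: zc_le_iff)
qed

lemma less_if_inter_E_less:
  assumes "D \<le> F" and "inter M F (E i) < inter M D (E i)"
  shows "D i < F i"
proof (rule ccontr)
  assume "\<not> D i < F i"
  then have "(\<lambda>x. F x - D x) i = 0" using le_funD[OF assms(1), of i] by simp
  moreover have "zc \<le> (\<lambda>x. F x - D x)" unfolding zc_le_iff using assms(1) by (simp add: le_fun_def)
  ultimately have "0 \<le> inter M (\<lambda>x. F x - D x) (E i)" by (rule inter_E_nonneg_outside_supp[rotated])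
  then show False using assms(2) by (simp add: inter_diff_left)
qed

lemma inter_E_mono:
  assumes "X \<le> Y" and "X i = Y i"
  shows "inter M X (E i) \<le> inter M Y (E i)"
  using less_if_inter_E_less[OF assms(1), of i] assms(2) by fastforce

text \<open>Negativity lemma: split \<open>X\<close> into its positive and negative parts \<open>P - N\<close>; then
  \<open>0 \<ge> N\<cdot>X = N\<cdot>P - N\<^sup>2\<close> with \<open>N\<cdot>P \<ge> 0\<close> forces \<open>N\<^sup>2 \<ge> 0\<close>, so \<open>N = 0\<close>.\<close>

lemma anti_nef_imp_nonneg:
  assumes "anti_nef M X"
  shows "zc \<le> X"
proof -
  define P where "P = (\<lambda>i. max 0 (X i))"
  define N where "N = (\<lambda>i. max 0 (- X i))"
  have "inter M N X \<le> 0"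
    unfolding inter_eq_sum_inter_E[of N X]
    using assms by (intro sum_nonpos) (simp add: anti_nef_def N_def mult_nonneg_nonpos)
  moreover have "0 \<le> inter M N P"
    unfolding inter_def
  proof (intro sum_nonneg)
    fix i j
    have "N i * P i = 0" by (simp add: N_def P_def max_def)
    moreover have "0 \<le> N i" "0 \<le> P j" by (simp_all add: N_def P_def)
    ultimately show "0 \<le> N i * P j * M i j"
      using M_offdiag_nonneg[of i j] by (cases "i = j") auto
  qed
  moreover have "X = (\<lambda>i. P i - N i)" unfolding P_def N_def by auto
  then have "inter M N X = inter M N P - inter M N N" by (simp add: inter_diff_right)
  ultimately have "\<not> inter M N N < 0" by simp
  then have "N = zc" using inter_self_neg by blast
  then have "N i = 0" for i by (simp add: zc_def)
  then show ?thesis unfolding zc_le_iff N_def by (metis max.absorb_iff1 neg_le_0_iff_le)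
qed

lemma anti_nef_full_support:
  assumes "anti_nef M D" and "zc < D"
  shows "D i \<noteq> 0"
proof (rule ccontr)
  define S where "S = {i. D i \<noteq> 0}"
  assume "\<not> D i \<noteq> 0"
  then have "S \<noteq> UNIV" by (auto simp: S_def)
  moreover have "S \<noteq> {}" using assms(2) by (auto simp: S_def zc_less_iff)
  ultimately obtain k l where "k \<in> S" "l \<notin> S" "M k l \<noteq> 0" using connected by blast
  then have kl: "0 < D k" "D l = 0" "k \<noteq> l"
    using zc_less_nonneg[OF assms(2), of k] by (auto simp: S_def)
  then have "0 < M k l" using M_offdiag_nonneg[of k l] \<open>M k l \<noteq> 0\<close> by simp
  have "0 \<le> (\<Sum>j\<in>UNIV - {k}. D j * M j l)"
  proof (rule sum_nonneg)
    fix j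
    show "0 \<le> D j * M j l"
      using kl(2) M_offdiag_nonneg[of j l] zc_less_nonneg[OF assms(2), of j] by (cases "j = l") simp_all
  qed
  moreover have "inter M D (E l) = D k * M k l + (\<Sum>j\<in>UNIV - {k}. D j * M j l)"
    unfolding inter_E_right by (simp add: sum.remove)
  ultimately have "0 < inter M D (E l)" using kl \<open>0 < M k l\<close> by (simp add: add_pos_nonneg)
  moreover have "inter M D (E l) \<le> 0" using assms(1) unfolding anti_nef_def by blast
  ultimately show False by simp
qed

lemma anti_nef_min:
  assumes "anti_nef M X" and "anti_nef M Y"
  shows "anti_nef M (\<lambda>x. min (X x) (Y x))"
  unfolding anti_nef_def
proof
  fix i
  have "inter M (\<lambda>x. min (X x) (Y x)) (E i) \<le> inter M (if X i \<le> Y i then X else Y) (E i)"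
    by (rule inter_E_mono) (auto simp: le_fun_def)
  moreover have "inter M (if X i \<le> Y i then X else Y) (E i) \<le> 0"
    using assms unfolding anti_nef_def by simp
  ultimately show "inter M (\<lambda>x. min (X x) (Y x)) (E i) \<le> 0" by (rule order_trans)
qed

lemma rat_cycle_eq_zero:
  fixes X :: "'i \<Rightarrow> rat"
  assumes "\<And>i. (\<Sum>j\<in>UNIV. X j * of_int (M j i)) = 0"
  shows "X = (\<lambda>_. 0)"
proof -
  obtain N W where N: "0 < N" and W: "\<And>j. of_int (W j) = of_int N * X j"
    using rat_vector_common_denominator[of X] by metis
  have "(of_int (inter M W (E i)) :: rat) = of_int N * (\<Sum>j\<in>UNIV. X j * of_int (M j i))" for i
    by (simp add: inter_E_right W sum_distrib_left mult.assoc)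
  then have "inter M W (E i) = 0" for i using assms by simp
  then have "inter M W W = 0" by (simp add: inter_eq_sum_inter_E[of W W])
  then have "W = zc" using inter_self_neg[of W] by (cases "W = zc") simp_all
  then show ?thesis using N W by (auto simp: zc_def fun_eq_iff)
qed

text \<open>By \<open>rat_cycle_eq_zero\<close> the intersection matrix is invertible over \<open>\<rat>\<close>; clearing the
  denominators of the rational solution of \<open>X\<cdot>E\<^sub>i = -1\<close> gives the cycle.\<close>

lemma ex_anti_ample_cycle: "\<exists>X. \<forall>i. inter M X (E i) < 0"
proof -
  define A :: "rat^'i^'i" where "A = (\<chi> i j. of_int (M i j))"
  have A_mult: "(A *v x) $ i = (\<Sum>j\<in>UNIV. x $ j * of_int (M j i))" for x i
    by (simp add: A_def matrix_vector_mult_def M_sym mult.commute)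
  have "x = 0" if "A *v x = 0" for x
  proof -
    have "(\<lambda>j. x $ j) = (\<lambda>_. 0)"
      by (rule rat_cycle_eq_zero) (use A_mult[of x] that in simp)
    then show "x = 0" by (simp add: vec_eq_iff fun_eq_iff)
  qed
  then obtain B where "B ** A = mat 1" using matrix_left_invertible_ker by blast
  then have "A ** B = mat 1" by (simp add: matrix_left_right_inverse)
  then have "surj ((*v) A)" using matrix_right_invertible_surjective by blast
  then obtain x where x: "A *v x = (\<chi> i. -1)" by (metis surjD)
  obtain N W where N: "0 < N" and W: "\<And>j. of_int (W j) = of_int N * x $ j"
    using rat_vector_common_denominator[of "\<lambda>j. x $ j"] by metis
  have "(of_int (inter M W (E i)) :: rat) = of_int N * (A *v x) $ i" for i
    by (simp add: inter_E_right A_mult W sum_distrib_left mult.assoc)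
  then have "(of_int (inter M W (E i)) :: rat) = of_int (- N)" for i using x by simp
  then have "inter M W (E i) < 0" for i using N by (simp only: of_int_eq_iff)
  then show ?thesis by blast
qed

lemma ex_least_anti_nef_cycle:
  "\<exists>Z. zc < Z \<and> anti_nef M Z \<and> (\<forall>D. zc < D \<and> anti_nef M D \<longrightarrow> Z \<le> D)"
proof -
  obtain X where X: "\<And>i. inter M X (E i) < 0" using ex_anti_ample_cycle by auto
  define P where "P = {D. zc < D \<and> anti_nef M D}"
  have "zc \<le> X" "anti_nef M X" using X anti_nef_imp_nonneg by (auto simp: anti_nef_def less_imp_le)
  moreover have "X \<noteq> zc" using X[of undefined] by (auto simp: inter_def zc_def)
  ultimately have "X \<in> P" by (simp add: P_def order.strict_iff_order)
  then obtain Z where Z: "Z \<in> P" and Z_least: "\<And>D. D \<in> P \<Longrightarrow> nat (sum Z UNIV) \<le> nat (sum D UNIV)"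
    using ex_has_least_nat[of "\<lambda>D. D \<in> P" X "\<lambda>D. nat (sum D UNIV)"] by blast
  have "Z \<le> D" if "D \<in> P" for D
  proof -
    let ?m = "\<lambda>i. min (Z i) (D i)"
    have "0 < Z i" "0 < D i" for i
      using Z that anti_nef_full_support[of Z i] anti_nef_full_support[of D i]
        zc_less_nonneg[of Z i] zc_less_nonneg[of D i] by (simp_all add: P_def)
    then have "zc < ?m" by (intro zc_lessI[of _ undefined]) (simp_all add: less_imp_le)
    moreover have "anti_nef M ?m" using Z that anti_nef_min by (simp add: P_def)
    ultimately have "nat (sum Z UNIV) \<le> nat (sum ?m UNIV)" using Z_least by (simp add: P_def)
    moreover have "0 \<le> sum ?m UNIV" using zc_less_nonneg[OF \<open>zc < ?m\<close>] by (simp add: sum_nonneg)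
    moreover have "sum ?m UNIV \<le> sum Z UNIV" by (rule sum_mono) simp
    ultimately have "sum (\<lambda>i. Z i - ?m i) UNIV = 0" by (simp add: sum_subtractf)
    moreover have "\<forall>i\<in>UNIV. 0 \<le> Z i - ?m i" by simp
    ultimately have "Z i = ?m i" for i using sum_nonneg_eq_0_iff[of UNIV "\<lambda>i. Z i - ?m i"] by simp
    then show "Z \<le> D" unfolding le_fun_def by (metis min.cobounded2)
  qed
  then show ?thesis using Z by (auto simp: P_def)
qed

lemma fund_cycle: "is_fund_on M UNIV (fund_cycle M)"
proof -
  obtain Z where Z_pos: "zc < Z" and Z_anti_nef: "anti_nef M Z"
    and Z_le: "\<And>D. zc < D \<Longrightarrow> anti_nef M D \<Longrightarrow> Z \<le> D"
    using ex_least_anti_nef_cycle by blast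
  have "is_fund_on M UNIV Z"
    unfolding is_fund_on_def
  proof (intro conjI ballI allI impI)
    show "supp Z = UNIV" using anti_nef_full_support[OF Z_anti_nef Z_pos] by (simp add: supp_def)
    show "inter M Z (E i) \<le> 0" for i using Z_anti_nef by (simp add: anti_nef_def)
    show "Z \<le> D" if "zc < D \<and> supp D = UNIV \<and> (\<forall>i\<in>UNIV. inter M D (E i) \<le> 0)" for D
      using that by (intro Z_le) (simp_all add: anti_nef_def)
  qed (fact Z_pos)
  moreover have "D = Z" if "is_fund_on M UNIV D" for D
  proof (rule order.antisym)
    show "D \<le> Z" "Z \<le> D"
      using that \<open>is_fund_on M UNIV Z\<close> unfolding is_fund_on_def by blast+
  qed
  ultimately show ?thesis unfolding fund_cycle_def by (rule theI)
qed

lemma fund_cycle_pos: "zc < fund_cycle M"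
  and fund_cycle_anti_nef: "anti_nef M (fund_cycle M)"
  and fund_cycle_least: "zc < D \<Longrightarrow> anti_nef M D \<Longrightarrow> fund_cycle M \<le> D"
  using fund_cycle anti_nef_full_support[of D]
  by (simp_all add: is_fund_on_def anti_nef_def supp_def)

lemma fund_cycle_coeff_pos: "0 < fund_cycle M i"
  using anti_nef_full_support[OF fund_cycle_anti_nef fund_cycle_pos, of i]
    zc_less_nonneg[OF fund_cycle_pos, of i] by linarith

lemma canonical_cycle_eqI:
  assumes "is_canonical_cycle M g ZK"
  shows "canonical_cycle M g = ZK"
  unfolding canonical_cycle_def
proof (rule the_equality)
  fix ZK' assume "is_canonical_cycle M g ZK'"
  then have "(\<Sum>j\<in>UNIV. (ZK' j - ZK j) * of_int (M j i)) = 0" for i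
    using assms unfolding is_canonical_cycle_def left_diff_distrib sum_subtractf by simp
  then have "(\<lambda>j. ZK' j - ZK j) = (\<lambda>_. 0)" by (rule rat_cycle_eq_zero)
  then show "ZK' = ZK" by (simp add: fun_eq_iff)
qed (fact assms)

lemma inter_nonneg_if_disjoint:
  assumes "zc \<le> U" and "zc \<le> V" and "\<And>i. U i = 0 \<or> V i = 0"
  shows "0 \<le> inter M U V"
  unfolding inter_def
proof (intro sum_nonneg)
  fix i j
  show "0 \<le> U i * V j * M i j"
    using assms(1,2) assms(3)[of i] M_offdiag_nonneg[of i j] by (cases "i = j") (auto simp: zc_le_iff)
qed

lemma inter_nonpos_if_anti_nef:
  assumes "anti_nef M Z" and "zc \<le> W"
  shows "inter M W Z \<le> 0"
  unfolding inter_eq_sum_inter_E[of W Z]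
  using assms by (intro sum_nonpos) (simp add: anti_nef_def zc_le_iff mult_nonneg_nonpos)

text \<open>With \<open>m = min X\<^sub>1 X\<^sub>2\<close>, \<open>X\<^sub>1 = m + U\<close>, \<open>X\<^sub>2 = m + V\<close> and \<open>max X\<^sub>1 X\<^sub>2 = m + U + V\<close>,
  the two sides differ by \<open>U\<cdot>V \<ge> 0\<close>.\<close>

lemma pa_min_max:
  "pa M g X\<^sub>1 + pa M g X\<^sub>2 \<le> pa M g (\<lambda>x. min (X\<^sub>1 x) (X\<^sub>2 x)) + pa M g (\<lambda>x. max (X\<^sub>1 x) (X\<^sub>2 x))"
proof -
  define m where "m x = min (X\<^sub>1 x) (X\<^sub>2 x)" for x
  define U where "U x = X\<^sub>1 x - m x" for x
  define V where "V x = X\<^sub>2 x - m x" for x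
  have "pa M g X\<^sub>1 = pa M g m + pa M g U + inter M m U - 1"
    using pa_add[of g m U] by (simp add: U_def)
  moreover have "pa M g X\<^sub>2 = pa M g m + pa M g V + inter M m V - 1"
    using pa_add[of g m V] by (simp add: V_def)
  moreover have "(\<lambda>x. max (X\<^sub>1 x) (X\<^sub>2 x)) = (\<lambda>x. (m x + U x) + V x)"
    by (auto simp: U_def V_def m_def fun_eq_iff)
  then have "pa M g (\<lambda>x. max (X\<^sub>1 x) (X\<^sub>2 x))
      = pa M g m + pa M g U + inter M m U - 1 + pa M g V + inter M m V + inter M U V - 1"
    using pa_add[of g m U] pa_add[of g "\<lambda>x. m x + U x" V] by (simp add: inter_add_left)
  moreover have "0 \<le> inter M U V"
    by (rule inter_nonneg_if_disjoint) (auto simp: zc_le_iff U_def V_def m_def)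
  moreover have "(\<lambda>x. min (X\<^sub>1 x) (X\<^sub>2 x)) = m" by (simp add: m_def fun_eq_iff)
  ultimately show ?thesis by simp
qed

lemma pa_le_pa_fund_cycle:
  assumes "zc < D" and "D \<le> fund_cycle M"
  shows "pa M g D \<le> pa M g (fund_cycle M)"
  using assms
proof (induction "nat (\<Sum>x\<in>UNIV. fund_cycle M x - D x)" arbitrary: D rule: less_induct)
  case less
  let ?Z = "fund_cycle M"
  show ?case
  proof (cases "anti_nef M D")
    case True
    with less.prems(1) have "?Z \<le> D" by (rule fund_cycle_least)
    then show ?thesis using less.prems(2) by (simp add: order.antisym)
  next
    case False
    then obtain i where i: "0 < inter M D (E i)" by (auto simp: anti_nef_def not_le)
    let ?D' = "\<lambda>x. D x + E i x"
    have "inter M ?Z (E i) \<le> 0" using fund_cycle_anti_nef by (simp add: anti_nef_def)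
    then have "D i < ?Z i" using less_if_inter_E_less[OF less.prems(2)] i by simp
    then have D'_le: "?D' \<le> ?Z" using less.prems(2) by (simp add: le_add_E_iff)
    have "(\<Sum>x\<in>UNIV. ?Z x - ?D' x) = (\<Sum>x\<in>UNIV. ?Z x - D x) - 1"
      by (simp add: sum_subtractf sum.distrib sum_E algebra_simps)
    moreover have "0 \<le> (\<Sum>x\<in>UNIV. ?Z x - ?D' x)"
      using D'_le by (intro sum_nonneg) (simp add: le_fun_def)
    ultimately have "pa M g ?D' \<le> pa M g ?Z"
      using less.hyps[of ?D'] zc_less_add_E[of D i] less.prems(1) D'_le by simp
    then show ?thesis using i by (simp add: pa_add_E)
  qed
qed

text \<open>Compare \<open>X\<close> with \<open>min X Z\<close> and \<open>max X Z = Z + W\<close>, where \<open>W = X - min X Z\<close> is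
  smaller than \<open>X\<close> and \<open>Z\<cdot>W \<le> 0\<close>.\<close>

lemma pa_le_1_if_fund_genus_1:
  assumes "pa M g (fund_cycle M) = 1" and "zc < X"
  shows "pa M g X \<le> 1"
  using assms(2)
proof (induction "nat (sum X UNIV)" arbitrary: X rule: less_induct)
  case less
  let ?Z = "fund_cycle M"
  let ?m = "\<lambda>x. min (X x) (?Z x)"
  define W where "W x = X x - ?m x" for x
  show ?case
  proof (cases "X \<le> ?Z")
    case True
    then show ?thesis using pa_le_pa_fund_cycle[OF less.prems True, of g] assms(1) by simp
  next
    case False
    obtain y where "X y \<noteq> 0" using less.prems by (auto simp: zc_less_iff)
    then have "0 < ?m y"
      using zc_less_nonneg[OF less.prems, of y] fund_cycle_coeff_pos[of y] by simp
    then have m_pos: "zc < ?m"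
      using zc_less_nonneg[OF less.prems] fund_cycle_coeff_pos by (intro zc_lessI[of _ y]) (simp add: less_imp_le)
    have "pa M g ?m \<le> 1"
      using pa_le_pa_fund_cycle[OF m_pos, of g] assms(1) by (simp add: le_fun_def)
    obtain z where "\<not> X z \<le> ?Z z" using False by (auto simp: le_fun_def)
    then have W_pos: "zc < W" by (intro zc_lessI[of _ z]) (auto simp: W_def)
    have "sum X UNIV = sum W UNIV + sum ?m UNIV" by (simp add: W_def sum.distrib[symmetric])
    moreover have "0 < sum ?m UNIV"
      using zc_less_nonneg[OF m_pos] \<open>0 < ?m y\<close> by (intro sum_pos2[of _ y]) auto
    moreover have "0 \<le> sum W UNIV" using zc_less_nonneg[OF W_pos] by (simp add: sum_nonneg)
    ultimately have "pa M g W \<le> 1" using less.hyps[OF _ W_pos] by simp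
    moreover have "(\<lambda>x. max (X x) (?Z x)) = (\<lambda>x. ?Z x + W x)"
      by (auto simp: W_def fun_eq_iff)
    moreover have "inter M ?Z W \<le> 0"
      using inter_nonpos_if_anti_nef[OF fund_cycle_anti_nef] W_pos inter_commute
      by (metis less_imp_le)
    ultimately have "pa M g (\<lambda>x. max (X x) (?Z x)) \<le> 1" using assms(1) by (simp add: pa_add)
    then show ?thesis
      using pa_min_max[of g X ?Z] \<open>pa M g ?m \<le> 1\<close> assms(1) by simp
  qed
qed

lemma zc_if_num_trivial_self:
  assumes "num_trivial M D D"
  shows "D = zc"
proof -
  have "D i * inter M D (E i) = 0" for i
    using assms by (cases "D i = 0") (simp_all add: num_trivial_def supp_def)
  then have "inter M D D = 0" unfolding inter_eq_sum_inter_E[of D D] by (intro sum.neutral) blast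
  then show ?thesis using inter_self_neg[of D] by (cases "D = zc") simp_all
qed

lemma ess_irreducible_fund_cycle:
  assumes "ess_irreducible M g (fund_cycle M)"
  obtains A where "\<not> minus2_curve M g A" and "\<And>j. j \<noteq> A \<Longrightarrow> minus2_curve M g j"
proof -
  obtain A where A: "\<not> minus2_curve M g A"
    and rest: "fund_cycle M = (\<lambda>j. fund_cycle M A * E A j)
      \<or> (\<forall>j\<in>supp (\<lambda>j. fund_cycle M j - fund_cycle M A * E A j). minus2_curve M g j)"
    using assms unfolding ess_irreducible_def by blast
  have "minus2_curve M g j" if "j \<noteq> A" for j
  proof -
    have "fund_cycle M j \<noteq> fund_cycle M A * E A j"
      using fund_cycle_coeff_pos[of j] that by (simp add: E_def)
    moreover from this have "fund_cycle M \<noteq> (\<lambda>j. fund_cycle M A * E A j)" by metis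
    ultimately show ?thesis using rest by (simp add: supp_def)
  qed
  with A show ?thesis by (rule that)
qed

end

section \<open>Essentially irreducible fundamental cycles of degree two\<close>

locale degree_two_yau_sequence = exceptional_set M for M :: "'i::finite \<Rightarrow> 'i \<Rightarrow> int" +
  fixes g :: "'i \<Rightarrow> nat" and A :: 'i and ds :: "'i cycle list"
  assumes minimal: "minimal_resolution M g"
    and A_not_minus2: "\<not> minus2_curve M g A"
    and minus2_curve: "j \<noteq> A \<Longrightarrow> minus2_curve M g j"
    and genus_pos: "0 < pa M g (fund_cycle M)"
    and degree_two: "inter M (fund_cycle M) (fund_cycle M) = -2"
    and yau_seq: "is_yau_seq M g ds"
    and last_eq_Zmin: "last ds = Zmin M g"
begin

text \<open>The list is indexed from 0: \<open>ds ! k\<close> is the term \<open>D\<^sub>k\<^sub>+\<^sub>1\<close> of the paper, and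
  \<open>D\<^sub>k\<close> below stands for \<open>ds ! k\<close>.\<close>

abbreviation "Z \<equiv> fund_cycle M"
abbreviation "p \<equiv> pa M g (fund_cycle M)"
abbreviation "kappa \<equiv> canon M g A"

lemma genus_0: "j \<noteq> A \<Longrightarrow> g j = 0"
  and M_diag_minus2: "j \<noteq> A \<Longrightarrow> M j j = -2"
  and canon_0: "j \<noteq> A \<Longrightarrow> canon M g j = 0"
  using minus2_curve by (simp_all add: minus2_curve_def canon_def)

lemma kappa_pos: "0 < kappa"
proof (cases "g A = 0")
  case True
  then have "M A A \<noteq> -2" "M A A \<noteq> -1"
    using A_not_minus2 minimal[unfolded minimal_resolution_def, rule_format, of A]
    by (simp_all add: minus2_curve_def)
  then show ?thesis using True M_diag_neg[of A] by (simp add: canon_def)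
next
  case False
  then show ?thesis using M_diag_neg[of A] by (simp add: canon_def)
qed

lemma Kdot_eq: "Kdot M g D = D A * kappa"
proof -
  have "Kdot M g D = (\<Sum>i\<in>UNIV. if i = A then D A * kappa else 0)"
    unfolding Kdot_def by (rule sum.cong) (simp_all add: canon_0)
  then show ?thesis by simp
qed

lemma pa_double_eq: "2 * pa M g D = 2 + inter M D D + D A * kappa"
  using pa_double[of g D] by (simp add: Kdot_eq)

lemma fund_genus_eq: "2 * p = Z A * kappa"
  using pa_double_eq[of Z] degree_two by simp

lemma pa_add_minus2: "j \<noteq> A \<Longrightarrow> pa M g (\<lambda>x. D x + E j x) = pa M g D + inter M D (E j) - 1"
  using pa_add_E[of g D j] genus_0 by simp

lemma pa_nonpos_if_A_coeff_0:
  assumes "zc < D" and "D A = 0"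
  shows "pa M g D \<le> 0"
proof -
  have "inter M D D < 0" using assms(1) inter_self_neg by auto
  moreover have "even (inter M D D)" using even_inter_self_Kdot[of D g] assms(2) by (simp add: Kdot_eq)
  ultimately have "inter M D D \<le> -2" by presburger
  then show ?thesis using pa_double_eq[of D] assms(2) by simp
qed

lemma A_coeff_pos:
  assumes "zc < D" and "pa M g D = p"
  shows "0 < D A"
proof (rule ccontr)
  assume "\<not> 0 < D A"
  then have "D A = 0" using zc_less_nonneg[OF assms(1), of A] by simp
  then show False using pa_nonpos_if_A_coeff_0[OF assms(1)] assms(2) genus_pos by simp
qed

lemma min_genus_cycle_unique:
  assumes "is_min_genus_cycle M g D\<^sub>1" and "is_min_genus_cycle M g D\<^sub>2"
  shows "D\<^sub>1 = D\<^sub>2"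
proof -
  let ?m = "\<lambda>x. min (D\<^sub>1 x) (D\<^sub>2 x)" and ?mx = "\<lambda>x. max (D\<^sub>1 x) (D\<^sub>2 x)"
  have D: "zc < D\<^sub>k" "D\<^sub>k \<le> Z" "pa M g D\<^sub>k = p"
    and D_min: "\<And>D'. zc < D' \<Longrightarrow> D' \<le> D\<^sub>k \<Longrightarrow> pa M g D' = p \<Longrightarrow> D' = D\<^sub>k"
    if "D\<^sub>k \<in> {D\<^sub>1, D\<^sub>2}" for D\<^sub>k
    using assms that unfolding is_min_genus_cycle_def by auto
  have m_pos: "zc < ?m"
    using A_coeff_pos D(1,3) zc_less_nonneg[OF D(1)] by (intro zc_lessI[of _ A]) auto
  moreover have "zc < ?mx"
    using A_coeff_pos D(1,3) zc_less_nonneg[OF D(1)] by (intro zc_lessI[of _ A]) (auto simp: max_def)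
  moreover have "?m \<le> D\<^sub>1" "?m \<le> D\<^sub>2" "?m \<le> Z" "?mx \<le> Z"
    using D(2) by (auto simp: le_fun_def min.coboundedI1)
  ultimately have "pa M g ?m \<le> p" "pa M g ?mx \<le> p"
    by (simp_all add: pa_le_pa_fund_cycle)
  then have "pa M g ?m = p" using pa_min_max[of g D\<^sub>1 D\<^sub>2] D(3) by simp
  then show ?thesis
    using D_min[of D\<^sub>1 ?m] D_min[of D\<^sub>2 ?m] m_pos \<open>?m \<le> D\<^sub>1\<close> \<open>?m \<le> D\<^sub>2\<close> by simp
qed

lemma Zmin: "is_min_genus_cycle M g (Zmin M g)"
proof -
  define P where "P = {D. zc < D \<and> D \<le> Z \<and> pa M g D = p}"
  have "Z \<in> P" using fund_cycle_pos by (simp add: P_def)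
  then obtain D\<^sub>0 where D\<^sub>0: "D\<^sub>0 \<in> P" and least: "\<And>D. D \<in> P \<Longrightarrow> nat (sum D\<^sub>0 UNIV) \<le> nat (sum D UNIV)"
    using ex_has_least_nat[of "\<lambda>D. D \<in> P" Z "\<lambda>D. nat (sum D UNIV)"] by auto
  have D\<^sub>0_min: "is_min_genus_cycle M g D\<^sub>0"
    unfolding is_min_genus_cycle_def
  proof (intro conjI allI impI)
    show "zc < D\<^sub>0" "D\<^sub>0 \<le> Z" "pa M g D\<^sub>0 = p" using D\<^sub>0 by (simp_all add: P_def)
  next
    fix D assume D: "zc < D \<and> D \<le> D\<^sub>0 \<and> pa M g D = p"
    then have "D \<in> P" using D\<^sub>0 by (auto simp: P_def intro: order.trans)
    moreover have "0 \<le> sum D UNIV" using zc_less_nonneg[of D] D by (simp add: sum_nonneg)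
    ultimately have "sum D\<^sub>0 UNIV \<le> sum D UNIV" using least by fastforce
    show "D = D\<^sub>0"
    proof (rule ccontr)
      assume "D \<noteq> D\<^sub>0"
      with D have "D < D\<^sub>0" by (simp add: order.strict_iff_order)
      then obtain y where "D y < D\<^sub>0 y" by (auto simp: less_fun_def le_fun_def not_le)
      then have "sum D UNIV < sum D\<^sub>0 UNIV"
        using \<open>D < D\<^sub>0\<close> by (intro sum_strict_mono_ex1) (auto simp: less_fun_def le_fun_def)
      with \<open>sum D\<^sub>0 UNIV \<le> sum D UNIV\<close> show False by simp
    qed
  qed
  show ?thesis
    unfolding Zmin_def by (rule theI[of "is_min_genus_cycle M g", OF D\<^sub>0_min])
      (use D\<^sub>0_min min_genus_cycle_unique in blast)
qed

abbreviation "Zm \<equiv> Zmin M g"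

lemma Zmin_pos: "zc < Zm"
  and Zmin_le_fund: "Zm \<le> Z"
  and pa_Zmin: "pa M g Zm = p"
  and Zmin_least: "zc < D \<Longrightarrow> D \<le> Zm \<Longrightarrow> pa M g D = p \<Longrightarrow> D = Zm"
  using Zmin unfolding is_min_genus_cycle_def by auto

lemma Zmin_A_pos: "0 < Zm A"
  using A_coeff_pos[OF Zmin_pos pa_Zmin] .

lemma Yau_first: "ds ! 0 = Z"
  and Yau_nonempty: "ds \<noteq> []"
  and Yau_step: "Suc k < length ds \<Longrightarrow> is_tyurina M g (ds ! k) (ds ! Suc k)"
  and Yau_num_trivial_Zmin: "Suc k < length ds \<Longrightarrow> num_trivial M (ds ! k) Zm"
  using yau_seq unfolding is_yau_seq_def by auto

lemma Yau_last: "ds ! (length ds - 1) = Zm"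
  using last_eq_Zmin Yau_nonempty by (simp add: last_conv_nth)

lemma Yau_step_less: "Suc k < length ds \<Longrightarrow> ds ! Suc k < ds ! k"
  and Yau_step_num_trivial: "Suc k < length ds \<Longrightarrow> num_trivial M (ds ! k) (ds ! Suc k)"
  using Yau_step unfolding is_tyurina_def by auto

lemma Yau_term: "k < length ds \<Longrightarrow> zc < ds ! k \<and> ds ! k \<le> Z \<and> pa M g (ds ! k) = p"
proof (induction k)
  case 0
  then show ?case using fund_cycle_pos by (simp add: Yau_first)
next
  case (Suc k)
  then show ?case
    using Yau_step[OF Suc.prems] Yau_step_less[OF Suc.prems]
    by (auto simp: is_tyurina_def intro: order.trans less_imp_le)
qed

lemma Yau_pos: "k < length ds \<Longrightarrow> zc < ds ! k"
  and Yau_le_fund: "k < length ds \<Longrightarrow> ds ! k \<le> Z"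
  and pa_Yau: "k < length ds \<Longrightarrow> pa M g (ds ! k) = p"
  using Yau_term by auto

lemma Yau_A_pos: "k < length ds \<Longrightarrow> 0 < (ds ! k) A"
  using A_coeff_pos[OF Yau_pos pa_Yau] .

lemma Yau_antimono: "k \<le> j \<Longrightarrow> j < length ds \<Longrightarrow> ds ! j \<le> ds ! k"
proof (induction j rule: dec_induct)
  case (step j)
  then show ?case using Yau_step_less[of j] by (meson Suc_lessD less_imp_le order.trans)
qed simp

lemma Zmin_le_Yau: "k < length ds \<Longrightarrow> Zm \<le> ds ! k"
  using Yau_antimono[of k "length ds - 1"] Yau_last by simp

lemma Yau_inter_E_0_if_later_supp:
  assumes "k < j" and "j < length ds" and "(ds ! j) i \<noteq> 0"
  shows "inter M (ds ! k) (E i) = 0"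
proof -
  have "ds ! j \<le> ds ! Suc k" using assms by (intro Yau_antimono) auto
  then have "(ds ! Suc k) i \<noteq> 0"
    using assms(3) zc_less_nonneg[OF Yau_pos[OF assms(2)], of i] le_funD[of "ds ! j" "ds ! Suc k" i]
    by linarith
  then show ?thesis
    using Yau_step_num_trivial[of k] assms(1,2) by (simp add: num_trivial_def supp_def)
qed

lemma Yau_orthogonal:
  assumes "k < j" and "j < length ds"
  shows "inter M (ds ! k) (ds ! j) = 0"
proof -
  have "inter M (ds ! k) (ds ! j) = inter M (ds ! j) (ds ! k)" by (rule inter_commute)
  also have "\<dots> = (\<Sum>i\<in>UNIV. (ds ! j) i * inter M (ds ! k) (E i))" by (rule inter_eq_sum_inter_E)
  also have "\<dots> = 0"
    using Yau_inter_E_0_if_later_supp[OF assms] by (intro sum.neutral) (metis mult_eq_0_iff)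
  finally show ?thesis .
qed

lemma Yau_inter_E_A: "Suc k < length ds \<Longrightarrow> inter M (ds ! k) (E A) = 0"
  using Yau_num_trivial_Zmin Zmin_A_pos by (simp add: num_trivial_def supp_def)

text \<open>Otherwise a component could be added to the Tyurina component without lowering the
  genus, and minimality of the resolution excludes that this recovers the previous term.\<close>

lemma Yau_inter_E_nonpos:
  assumes "k < length ds" and "(ds ! k) i \<noteq> 0"
  shows "inter M (ds ! k) (E i) \<le> 0"
proof (cases k)
  case 0
  then show ?thesis using fund_cycle_anti_nef by (simp add: Yau_first anti_nef_def)
next
  case (Suc l)
  let ?D = "ds ! l" and ?D' = "ds ! Suc l" and ?D'' = "\<lambda>x. (ds ! Suc l) x + E i x"
  have step: "Suc l < length ds" using assms(1) Suc by simp
  have D'_le: "?D' \<le> ?D" using Yau_step_less[OF step] by simp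
  have D_i: "inter M ?D (E i) = 0"
    using Yau_step_num_trivial[OF step] assms(2) Suc by (simp add: num_trivial_def supp_def)
  show ?thesis
  proof (rule ccontr)
    assume "\<not> ?thesis"
    then have pos: "0 < inter M ?D' (E i)" using Suc by simp
    then have "?D' i < ?D i" using less_if_inter_E_less[OF D'_le] D_i by simp
    then have D''_le: "?D'' \<le> ?D" using D'_le by (simp add: le_add_E_iff)
    have D''_pos: "zc < ?D''" using Yau_pos[OF step] by (simp add: zc_less_add_E less_imp_le)
    have "pa M g ?D'' \<le> p"
      using pa_le_pa_fund_cycle[OF D''_pos] D''_le Yau_le_fund[of l] step by (meson Suc_lessD order.trans)
    then have g_i: "g i = 0" and D'_i: "inter M ?D' (E i) = 1"
      using pa_add_E[of g ?D' i] pa_Yau[OF step] pos by simp_all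
    have "?D'' \<noteq> ?D"
    proof
      assume "?D'' = ?D"
      then have "inter M ?D (E i) = inter M ?D' (E i) + M i i" by (metis inter_add_left inter_E_E)
      then have "M i i = -1" using D_i D'_i by simp
      then show False using minimal[unfolded minimal_resolution_def, rule_format, of i] g_i by simp
    qed
    then have "?D'' < ?D" using D''_le by simp
    from tyurina_add_E_genus[OF Yau_step[OF step] this D_i] show False
      using pa_add_E[of g ?D' i] pa_Yau[OF step] pa_Yau[of l] step g_i D'_i by simp
  qed
qed

lemma pa_diff_minus2:
  assumes "j \<noteq> A"
  shows "pa M g (\<lambda>x. D x - E j x) = pa M g D - inter M D (E j) - 1"
proof -
  have "pa M g D = pa M g (\<lambda>x. D x - E j x) + inter M (\<lambda>x. D x - E j x) (E j) - 1"
    using pa_add_minus2[OF assms, of "\<lambda>x. D x - E j x"] by simp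
  then show ?thesis using M_diag_minus2[OF assms] by (simp add: inter_diff_left inter_E_E)
qed

lemma zc_less_diff_E:
  assumes "zc < D" and "D j \<noteq> 0" and "j \<noteq> A" and "0 < D A"
  shows "zc < (\<lambda>x. D x - E j x)"
proof (rule zc_lessI[of _ A])
  show "0 \<le> D x - E j x" for x
    using zc_less_nonneg[OF assms(1), of x] assms(2) by (cases "x = j") (simp_all add: E_def)
qed (use assms(3,4) in \<open>simp add: E_def\<close>)

lemma inter_E_ge_minus1:
  assumes "j \<noteq> A" and "zc < D" and "D \<le> Z" and "D j \<noteq> 0" and "pa M g D = p"
  shows "-1 \<le> inter M D (E j)"
proof -
  have "zc < (\<lambda>x. D x - E j x)"
    using zc_less_diff_E[OF assms(2,4,1) A_coeff_pos[OF assms(2,5)]] .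
  moreover have "D x - E j x \<le> Z x" for x
    using le_funD[OF assms(3), of x] E_nonneg[of j x] by linarith
  then have "(\<lambda>x. D x - E j x) \<le> Z" by (simp add: le_fun_def)
  ultimately have "pa M g (\<lambda>x. D x - E j x) \<le> p" by (rule pa_le_pa_fund_cycle)
  then show ?thesis using pa_diff_minus2[OF assms(1), of D] assms(5) by simp
qed

lemma Zmin_inter_E:
  assumes "j \<noteq> A" and "Zm j \<noteq> 0"
  shows "inter M Zm (E j) = 0"
proof (rule order.antisym)
  show "inter M Zm (E j) \<le> 0"
    using Yau_inter_E_nonpos[of "length ds - 1" j] Yau_nonempty Yau_last assms(2) by simp
  show "0 \<le> inter M Zm (E j)"
  proof (rule ccontr)
    let ?D = "\<lambda>x. Zm x - E j x"
    assume "\<not> ?thesis"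
    then have "p \<le> pa M g ?D" using pa_diff_minus2[OF assms(1), of Zm] pa_Zmin by simp
    moreover have D_pos: "zc < ?D" using zc_less_diff_E[OF Zmin_pos assms(2,1) Zmin_A_pos] .
    moreover have D_le: "?D \<le> Zm" using E_nonneg[of j] by (simp add: le_fun_def)
    moreover have "?D \<le> Z" using D_le Zmin_le_fund by (rule order.trans)
    then have "pa M g ?D \<le> p" by (rule pa_le_pa_fund_cycle[OF D_pos])
    ultimately have "?D = Zm" using Zmin_least[OF D_pos D_le] by simp
    then show False using fun_cong[OF \<open>?D = Zm\<close>, of j] by (simp add: E_def)
  qed
qed

lemma Zmin_self_inter: "inter M Zm Zm = Zm A * inter M Zm (E A)"
proof -
  have "inter M Zm Zm = (\<Sum>i\<in>UNIV. if i = A then Zm A * inter M Zm (E A) else 0)"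
    unfolding inter_eq_sum_inter_E[of Zm Zm]
  proof (rule sum.cong)
    show "Zm i * inter M Zm (E i) = (if i = A then Zm A * inter M Zm (E A) else 0)" for i
      using Zmin_inter_E[of i] by (cases "i = A"; cases "Zm i = 0") simp_all
  qed simp
  then show ?thesis by simp
qed

text \<open>Comparing \<open>Z\<^sub>m\<^sub>i\<^sub>n\<^sup>2 = Z\<^sub>m\<^sub>i\<^sub>n(A) (Z\<^sub>m\<^sub>i\<^sub>n\<cdot>E\<^sub>A)\<close> with the genus formula gives
  \<open>Z\<^sub>m\<^sub>i\<^sub>n(A) (-Z\<^sub>m\<^sub>i\<^sub>n\<cdot>E\<^sub>A) = 2 - \<kappa> (Z(A) - Z\<^sub>m\<^sub>i\<^sub>n(A))\<close> with \<open>\<kappa> = K\<cdot>E\<^sub>A \<ge> 1\<close>;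
  as the left side is positive, either the coefficients of \<open>A\<close> agree or everything is
  forced to be minimal.\<close>

lemma Zmin_A_cases:
  "Zm A = Z A \<and> Zm A * inter M Zm (E A) = -2
   \<or> p = 1 \<and> kappa = 1 \<and> Zm A = 1 \<and> Z A = 2 \<and> inter M Zm (E A) = -1"
proof -
  define t where "t = - inter M Zm (E A)"
  have eq: "Zm A * t = 2 - kappa * (Z A - Zm A)"
    using pa_double_eq[of Zm] pa_Zmin fund_genus_eq Zmin_self_inter
    by (simp add: t_def algebra_simps)
  have "0 < Zm A * t" using inter_self_neg[of Zm] Zmin_pos Zmin_self_inter by (auto simp: t_def)
  moreover have "Zm A \<le> Z A" using Zmin_le_fund by (simp add: le_fun_def)
  moreover have "0 < Zm A" by (rule Zmin_A_pos)
  ultimately consider "Zm A = Z A" | "kappa * (Z A - Zm A) = 1" "Zm A * t = 1"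
    using kappa_pos eq by (smt (verit) mult_le_cancel_left1 mult_pos_pos)
  then show ?thesis
  proof cases
    case 1
    then show ?thesis using eq by (simp add: t_def)
  next
    case 2
    then have "kappa = 1" "Z A = Zm A + 1" "Zm A = 1" "t = 1"
      using kappa_pos \<open>0 < Zm A\<close> by (simp_all add: pos_zmult_eq_1_iff)
    then show ?thesis using fund_genus_eq by (simp add: t_def)
  qed
qed

lemma fund_A_times_Zmin_E_A: "Z A * inter M Zm (E A) = -2"
  using Zmin_A_cases by auto

lemma elliptic_if_Zmin_A_less:
  "Zm A < Z A \<Longrightarrow> p = 1 \<and> kappa = 1 \<and> inter M Zm (E A) = -1"
  using Zmin_A_cases by auto

lemma Yau_step_add_E:
  assumes step: "Suc k < length ds" and "(ds ! k) i \<noteq> 0" and "(ds ! Suc k) i = 0"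
  shows "i \<noteq> A"
    and "(\<lambda>x. (ds ! Suc k) x + E i x) \<le> ds ! k"
    and "pa M g (\<lambda>x. (ds ! Suc k) x + E i x) = p + inter M (ds ! Suc k) (E i) - 1"
    and "0 \<le> inter M (ds ! Suc k) (E i)"
    and "inter M (ds ! Suc k) (E i) \<le> 1"
proof -
  let ?D = "ds ! k" and ?D' = "ds ! Suc k" and ?D'' = "\<lambda>x. (ds ! Suc k) x + E i x"
  show iA: "i \<noteq> A" using Yau_A_pos[OF step] assms(3) by auto
  have "0 < ?D i" using zc_less_nonneg[OF Yau_pos[of k]] step assms(2) by (simp add: order.strict_iff_order)
  then show D''_le: "?D'' \<le> ?D" using Yau_step_less[OF step] assms(3) by (simp add: le_add_E_iff)
  show pa: "pa M g ?D'' = p + inter M ?D' (E i) - 1"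
    using pa_add_minus2[OF iA, of ?D'] pa_Yau[OF step] by simp
  show "0 \<le> inter M ?D' (E i)"
    using inter_E_nonneg_outside_supp[of ?D' i] Yau_pos[OF step] assms(3) by (simp add: less_imp_le)
  have "?D'' \<le> Z" using D''_le Yau_le_fund[of k] step by (meson Suc_lessD order.trans)
  then have "pa M g ?D'' \<le> p"
    using pa_le_pa_fund_cycle[OF zc_less_add_E] Yau_pos[OF step] by (simp add: less_imp_le)
  then show "inter M ?D' (E i) \<le> 1" using pa by simp
qed

lemma Yau_step_inter_E_sum_nonpos:
  assumes step: "Suc k < length ds" and "(ds ! k) i \<noteq> 0" and "(ds ! Suc k) i = 0"
  shows "inter M (ds ! Suc k) (E i) + inter M (ds ! k) (E i) \<le> 0"
proof -
  let ?D = "ds ! k" and ?D' = "ds ! Suc k" and ?D'' = "\<lambda>x. (ds ! Suc k) x + E i x"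
  note add_E = Yau_step_add_E[OF assms]
  have "-1 \<le> inter M ?D (E i)" "inter M ?D (E i) \<le> 0"
    using inter_E_ge_minus1[OF add_E(1) Yau_pos Yau_le_fund assms(2) pa_Yau]
      Yau_inter_E_nonpos[of k i] step assms(2) by simp_all
  moreover have "inter M ?D' (E i) \<noteq> 1" if "inter M ?D (E i) = 0"
  proof
    assume D'_i: "inter M ?D' (E i) = 1"
    have "inter M ?D'' (E i) = -1"
      using D'_i M_diag_minus2[OF add_E(1)] by (simp add: inter_add_left inter_E_E)
    then have "?D'' < ?D" using add_E(2) that by (auto simp: order.strict_iff_order)
    from tyurina_add_E_genus[OF Yau_step[OF step] this that] show False
      using add_E(3) D'_i pa_Yau[of k] step by simp
  qed
  ultimately show ?thesis using add_E(5) by linarith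
qed

lemma Yau_step_sum_eq:
  assumes step: "Suc k < length ds"
  shows "(\<Sum>i\<in>UNIV. ((ds ! k) i - (ds ! Suc k) i) * inter M (ds ! Suc k) (E i)
      + (ds ! k) i * inter M (ds ! k) (E i)) = - (((ds ! k) A - (ds ! Suc k) A) * kappa)"
proof -
  let ?D = "ds ! k" and ?D' = "ds ! Suc k"
  define C where "C = (\<lambda>x. ?D x - ?D' x)"
  have "(\<Sum>i\<in>UNIV. C i * inter M ?D' (E i) + ?D i * inter M ?D (E i)) = inter M C ?D' + inter M ?D ?D"
    by (simp add: sum.distrib inter_eq_sum_inter_E[of C ?D'] inter_eq_sum_inter_E[of ?D ?D])
  also have "\<dots> = inter M ?D ?D - inter M ?D' ?D'"
    using Yau_orthogonal[of k "Suc k"] step inter_diff_left[of M ?D ?D' ?D'] inter_commute[of ?D ?D']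
    by (simp add: C_def)
  also have "\<dots> = - (C A * kappa)"
    using pa_double_eq[of ?D] pa_double_eq[of ?D'] pa_Yau[of k] pa_Yau[OF step] step
    by (simp add: C_def algebra_simps)
  finally show ?thesis by (simp add: C_def)
qed

text \<open>In the sum of \<open>Yau_step_sum_eq\<close> all summands except those at \<open>A\<close> and at \<open>j\<close> are
  non-positive.\<close>

lemma Yau_step_estimate:
  assumes step: "Suc k < length ds" and "(ds ! k) j \<noteq> 0" and "(ds ! Suc k) j = 0"
  shows "- (ds ! k) j * (inter M (ds ! Suc k) (E j) + inter M (ds ! k) (E j))
    \<le> ((ds ! k) A - (ds ! Suc k) A) * (kappa + inter M (ds ! Suc k) (E A))"
proof -
  let ?D = "ds ! k" and ?D' = "ds ! Suc k"
  define C where "C x = ?D x - ?D' x" for x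
  have k: "k < length ds" using step by simp
  have C_nonneg: "0 \<le> C x" for x using Yau_step_less[OF step] by (simp add: C_def less_fun_def le_fun_def)
  have total: "(\<Sum>i\<in>UNIV. C i * inter M ?D' (E i) + ?D i * inter M ?D (E i)) = - (C A * kappa)"
    using Yau_step_sum_eq[OF step] by (simp add: C_def)
  have "C i * inter M ?D' (E i) + ?D i * inter M ?D (E i)
      \<le> (if i = A then C A * inter M ?D' (E A) else 0)
        + (if i = j then ?D j * (inter M ?D' (E j) + inter M ?D (E j)) else 0)" for i
  proof (cases "?D' i = 0")
    case True
    then have "i \<noteq> A" using Yau_A_pos[OF step] by auto
    moreover have "?D i * (inter M ?D' (E i) + inter M ?D (E i)) \<le> 0" if "i \<noteq> j"
      using Yau_step_inter_E_sum_nonpos[OF step _ True] zc_less_nonneg[OF Yau_pos[OF k], of i]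
      by (cases "?D i = 0") (simp_all add: mult_nonneg_nonpos)
    ultimately show ?thesis using True by (simp add: C_def distrib_left)
  next
    case False
    then have "inter M ?D (E i) = 0"
      using Yau_step_num_trivial[OF step] by (simp add: num_trivial_def supp_def)
    moreover have "C i * inter M ?D' (E i) \<le> 0"
      using Yau_inter_E_nonpos[OF step False] C_nonneg by (simp add: mult_nonneg_nonpos)
    moreover have "i \<noteq> j" using False assms(3) by auto
    ultimately show ?thesis by simp
  qed
  then have "(\<Sum>i\<in>UNIV. C i * inter M ?D' (E i) + ?D i * inter M ?D (E i))
      \<le> (\<Sum>i\<in>UNIV. (if i = A then C A * inter M ?D' (E A) else 0)
        + (if i = j then ?D j * (inter M ?D' (E j) + inter M ?D (E j)) else 0))"
    by (rule sum_mono)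
  also have "\<dots> = C A * inter M ?D' (E A) + ?D j * (inter M ?D' (E j) + inter M ?D (E j))"
    by (simp add: sum.distrib)
  finally show ?thesis unfolding total by (simp add: C_def algebra_simps)
qed

text \<open>If \<open>p = 1\<close> and \<open>D\<^sub>k\<^sub>+\<^sub>1\<close> is not the last term, then \<open>min(D\<^sub>k\<^sub>+\<^sub>1 + Z\<^sub>m\<^sub>i\<^sub>n, D\<^sub>k)\<close> still has genus 1
  and is supported in \<open>D\<^sub>k\<^sub>+\<^sub>1\<close>, so by maximality of the Tyurina component it lies below
  \<open>D\<^sub>k\<^sub>+\<^sub>1\<close>.\<close>

lemma elliptic_Yau_A_coeff_eq:
  assumes "p = 1" and step: "Suc (Suc k) < length ds"
  shows "(ds ! Suc k) A = (ds ! k) A"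
proof -
  let ?D = "ds ! k" and ?D' = "ds ! Suc k"
  let ?X = "\<lambda>x. ?D' x + Zm x"
  let ?m = "\<lambda>x. min (?X x) (?D x)" and ?mx = "\<lambda>x. max (?X x) (?D x)"
  have k: "k < length ds" "Suc k < length ds" using step by simp_all
  have nonneg: "0 \<le> ?D x" "0 \<le> ?D' x" "0 \<le> Zm x" for x
    using zc_less_nonneg[OF Yau_pos[OF k(1)]] zc_less_nonneg[OF Yau_pos[OF k(2)]]
      zc_less_nonneg[OF Zmin_pos] by auto
  have "inter M ?D' Zm = 0"
    using Yau_orthogonal[of "Suc k" "length ds - 1"] Yau_last step by simp
  then have "pa M g ?X = 1" using pa_add[of g ?D' Zm] pa_Yau[OF k(2)] pa_Zmin assms(1) by simp
  have m_pos: "zc < ?m"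
    using nonneg Yau_A_pos[OF k(1)] Yau_A_pos[OF k(2)] Zmin_A_pos by (intro zc_lessI[of _ A]) auto
  have "zc < ?mx"
    using nonneg Yau_A_pos[OF k(1)] by (intro zc_lessI[of _ A]) (auto simp: max_def)
  then have "pa M g ?mx \<le> 1" by (rule pa_le_1_if_fund_genus_1[OF assms(1)])
  moreover have "pa M g ?m \<le> 1" using m_pos by (rule pa_le_1_if_fund_genus_1[OF assms(1)])
  ultimately have "pa M g ?m = pa M g ?D"
    using pa_min_max[of g ?X ?D] \<open>pa M g ?X = 1\<close> pa_Yau[OF k(1)] assms(1) by linarith
  have supp_m: "?D' x \<noteq> 0" if "?m x \<noteq> 0" for x
  proof (rule ccontr)
    assume "\<not> ?D' x \<noteq> 0"
    moreover have "Zm x \<le> ?D' x" using Zmin_le_Yau[OF k(2)] by (simp add: le_fun_def)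
    ultimately show False using that nonneg[of x] by (simp add: min_def)
  qed
  have triv: "num_trivial M ?D ?m"
    using Yau_step_num_trivial[OF k(2)] supp_m by (simp add: num_trivial_def supp_def)
  have "?m \<noteq> ?D"
  proof
    assume "?m = ?D"
    then have "?D = zc" using triv by (simp add: zc_if_num_trivial_self)
    then show False using Yau_pos[OF k(1)] by simp
  qed
  then have "?m < ?D" by (simp add: order.strict_iff_order le_fun_def)
  then have "?m \<le> ?D'"
    using Yau_step[OF k(2)] m_pos triv \<open>pa M g ?m = pa M g ?D\<close> by (simp add: is_tyurina_def)
  then have "min (?D' A + Zm A) (?D A) \<le> ?D' A" by (simp add: le_fun_def)
  moreover have "?D' A \<le> ?D A" using Yau_step_less[OF k(2)] by (simp add: less_fun_def le_fun_def)
  ultimately show ?thesis using Zmin_A_pos by (auto simp: min_def split: if_splits)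
qed

lemma Yau_step_inter_E_pos:
  assumes step: "Suc k < length ds" and D_j: "(ds ! k) j \<noteq> 0" "(ds ! Suc k) j = 0"
    and "inter M (ds ! k) (E j) = -1"
  shows "0 < inter M (ds ! Suc k) (E j)"
proof (rule ccontr)
  let ?D = "ds ! k" and ?D' = "ds ! Suc k"
  let ?C = "?D A - ?D' A" and ?t = "kappa + inter M ?D' (E A)"
  assume "\<not> ?thesis"
  then have "inter M ?D' (E j) = 0" using Yau_step_add_E(4)[OF step D_j] by simp
  then have "?D j \<le> ?C * ?t" using Yau_step_estimate[OF step D_j] assms(4) by simp
  moreover have "0 < ?D j" using zc_less_nonneg[OF Yau_pos[of k]] step D_j(1) by (simp add: order.strict_iff_order)
  moreover have "0 \<le> ?C" using Yau_step_less[OF step] by (simp add: less_fun_def le_fun_def)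
  ultimately have "0 < ?C * ?t" "0 \<le> ?C" by linarith+
  then have C_pos: "0 < ?C" and t_pos: "0 < ?t" by (auto simp: zero_less_mult_iff)
  have "Zm A \<le> ?D' A" "?D A \<le> Z A"
    using Zmin_le_Yau[OF step] Yau_le_fund[of k] step by (simp_all add: le_fun_def)
  then have "Zm A < Z A" using C_pos by simp
  then have elliptic: "p = 1" "kappa = 1" "inter M Zm (E A) = -1"
    using elliptic_if_Zmin_A_less by simp_all
  show False
  proof (cases "Suc (Suc k) < length ds")
    case True
    then show False using elliptic_Yau_A_coeff_eq[OF elliptic(1)] C_pos by simp
  next
    case False
    then have "?D' = Zm" using Yau_last step by (metis Suc_lessI diff_Suc_1)
    then show False using t_pos elliptic by simp
  qed
qed

subsection \<open>The Yau cycle\<close>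

abbreviation "Y \<equiv> yau_cycle ds"

lemma inter_Yau_cycle: "inter M Y X = (\<Sum>k = 0..<length ds. inter M (ds ! k) X)"
proof -
  have "Y = (\<lambda>x. \<Sum>k = 0..<length ds. (ds ! k) x)"
    by (simp add: yau_cycle_def sum_list_sum_nth)
  then show ?thesis by (simp add: inter_sum_left)
qed

lemma Yau_cycle_inter_E_A: "inter M Y (E A) = inter M Zm (E A)"
proof -
  have "inter M Y (E A) = (\<Sum>k = 0..<length ds. if k = length ds - 1 then inter M Zm (E A) else 0)"
    unfolding inter_Yau_cycle
  proof (rule sum.cong)
    fix k assume "k \<in> {0..<length ds}"
    then have "k = length ds - 1 \<or> Suc k < length ds" by auto
    then show "inter M (ds ! k) (E A) = (if k = length ds - 1 then inter M Zm (E A) else 0)"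
      using Yau_inter_E_A[of k] Yau_last by auto
  qed simp
  then show ?thesis using Yau_nonempty by simp
qed

lemma Yau_cycle_inter_fund: "inter M Y Z = -2"
proof -
  have "inter M Y Z = (\<Sum>k = 0..<length ds. if k = 0 then -2 else 0)"
    unfolding inter_Yau_cycle
  proof (rule sum.cong)
    fix k assume "k \<in> {0..<length ds}"
    then show "inter M (ds ! k) Z = (if k = 0 then -2 else 0)"
      using Yau_orthogonal[of 0 k] Yau_first degree_two inter_commute[of "ds ! k" Z] by auto
  qed simp
  then show ?thesis using Yau_nonempty by simp
qed

lemma Yau_last_term_containing:
  obtains k\<^sub>0 where "k\<^sub>0 < length ds" and "(ds ! k\<^sub>0) j \<noteq> 0"
    and "\<And>k. k\<^sub>0 < k \<Longrightarrow> k < length ds \<Longrightarrow> (ds ! k) j = 0"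
proof -
  define K where "K = {k. k < length ds \<and> (ds ! k) j \<noteq> 0}"
  have "0 \<in> K" using Yau_nonempty Yau_first fund_cycle_coeff_pos[of j] by (simp add: K_def)
  moreover have "finite K" by (simp add: K_def)
  ultimately have "Max K \<in> K" by (intro Max_in) auto
  show ?thesis
  proof (rule that)
    show "Max K < length ds" "(ds ! Max K) j \<noteq> 0" using \<open>Max K \<in> K\<close> by (simp_all add: K_def)
    show "(ds ! k) j = 0" if "Max K < k" "k < length ds" for k
    proof (rule ccontr)
      assume "(ds ! k) j \<noteq> 0"
      then have "k \<in> K" using that(2) by (simp add: K_def)
      then show False using Max_ge[OF \<open>finite K\<close>, of k] that(1) by simp
    qed
  qed
qed

text \<open>Starting at the last term \<open>D\<^sub>k\<^sub>0\<close> containing the \<open>(-2)\<close>-curve \<open>E\<^sub>j\<close>: later terms meet \<open>E\<^sub>j\<close>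
  non-negatively and \<open>D\<^sub>k\<^sub>0\<cdot>E\<^sub>j \<ge> -1\<close>, where the value \<open>-1\<close> is compensated by \<open>D\<^sub>k\<^sub>0\<^sub>+\<^sub>1\<cdot>E\<^sub>j \<ge> 1\<close>.\<close>

lemma Yau_tail_inter_E_nonneg:
  assumes "j \<noteq> A" and k\<^sub>0: "k\<^sub>0 < length ds" "(ds ! k\<^sub>0) j \<noteq> 0"
    and after: "\<And>k. k\<^sub>0 < k \<Longrightarrow> k < length ds \<Longrightarrow> (ds ! k) j = 0"
  shows "0 \<le> (\<Sum>k = k\<^sub>0..<length ds. inter M (ds ! k) (E j))"
proof -
  define f where "f k = inter M (ds ! k) (E j)" for k
  have after_nonneg: "0 \<le> f k" if "k\<^sub>0 < k" "k < length ds" for k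
    using inter_E_nonneg_outside_supp[of "ds ! k" j] Yau_pos[OF that(2)] after[OF that]
    by (simp add: f_def less_imp_le)
  have "-1 \<le> f k\<^sub>0" "f k\<^sub>0 \<le> 0"
    using inter_E_ge_minus1[OF assms(1) Yau_pos Yau_le_fund k\<^sub>0(2) pa_Yau] Yau_inter_E_nonpos k\<^sub>0
    by (simp_all add: f_def)
  have "0 \<le> f k\<^sub>0 + (\<Sum>k = Suc k\<^sub>0..<length ds. f k)"
  proof (cases "f k\<^sub>0 = 0")
    case True
    moreover have "0 \<le> (\<Sum>k = Suc k\<^sub>0..<length ds. f k)" using after_nonneg by (intro sum_nonneg) auto
    ultimately show ?thesis by simp
  next
    case False
    then have "f k\<^sub>0 = -1" using \<open>-1 \<le> f k\<^sub>0\<close> \<open>f k\<^sub>0 \<le> 0\<close> by simp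
    have "Suc k\<^sub>0 < length ds"
    proof (rule ccontr)
      assume "\<not> Suc k\<^sub>0 < length ds"
      then have "ds ! k\<^sub>0 = Zm" using k\<^sub>0(1) Yau_last by (metis Suc_lessI diff_Suc_1)
      then show False using Zmin_inter_E[OF assms(1)] k\<^sub>0(2) False by (simp add: f_def)
    qed
    then have "0 < f (Suc k\<^sub>0)"
      using Yau_step_inter_E_pos k\<^sub>0(2) after \<open>f k\<^sub>0 = -1\<close> by (simp add: f_def)
    moreover have "f (Suc k\<^sub>0) \<le> (\<Sum>k = Suc k\<^sub>0..<length ds. f k)"
      using \<open>Suc k\<^sub>0 < length ds\<close> after_nonneg by (intro member_le_sum) auto
    ultimately show ?thesis using \<open>f k\<^sub>0 = -1\<close> by simp
  qed
  then show ?thesis using k\<^sub>0(1) by (simp add: f_def sum.atLeast_Suc_lessThan)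
qed

lemma Yau_cycle_inter_E_nonneg:
  assumes "j \<noteq> A"
  shows "0 \<le> inter M Y (E j)"
proof -
  obtain k\<^sub>0 where k\<^sub>0: "k\<^sub>0 < length ds" "(ds ! k\<^sub>0) j \<noteq> 0"
    and after: "\<And>k. k\<^sub>0 < k \<Longrightarrow> k < length ds \<Longrightarrow> (ds ! k) j = 0"
    using Yau_last_term_containing[of j] by metis
  have "(\<Sum>k = 0..<k\<^sub>0. inter M (ds ! k) (E j)) = 0"
    using Yau_inter_E_0_if_later_supp[OF _ k\<^sub>0] by simp
  then have "inter M Y (E j) = (\<Sum>k = k\<^sub>0..<length ds. inter M (ds ! k) (E j))"
    unfolding inter_Yau_cycle using k\<^sub>0(1)
    by (simp add: sum.atLeastLessThan_concat[of 0 k\<^sub>0 "length ds", symmetric])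
  then show ?thesis using Yau_tail_inter_E_nonneg[OF assms k\<^sub>0 after] by simp
qed

text \<open>\<open>Z\<cdot>Y = -2 = Z(A) (Y\<cdot>E\<^sub>A)\<close> and all other summands of \<open>Z\<cdot>Y\<close> are non-negative.\<close>

lemma Yau_cycle_inter_E_0:
  assumes "j \<noteq> A"
  shows "inter M Y (E j) = 0"
proof -
  let ?u = "\<lambda>i. Z i * inter M Y (E i)"
  have "(\<Sum>i\<in>UNIV. ?u i) = -2"
    using Yau_cycle_inter_fund inter_eq_sum_inter_E[of Z Y] inter_commute[of Z Y] by simp
  moreover have "(\<Sum>i\<in>UNIV. ?u i) = ?u A + (\<Sum>i\<in>UNIV - {A}. ?u i)" by (simp add: sum.remove)
  moreover have "?u A = -2" using fund_A_times_Zmin_E_A by (simp add: Yau_cycle_inter_E_A)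
  ultimately have "(\<Sum>i\<in>UNIV - {A}. ?u i) = 0" by simp
  moreover have "\<forall>i\<in>UNIV - {A}. 0 \<le> ?u i"
    using Yau_cycle_inter_E_nonneg fund_cycle_coeff_pos by (simp add: less_imp_le)
  ultimately have "?u j = 0" using assms sum_nonneg_eq_0_iff[of "UNIV - {A}" ?u] by simp
  then show ?thesis using fund_cycle_coeff_pos[of j] by simp
qed

lemma genus_times_Yau_cycle_inter_E: "p * inter M Y (E i) = - canon M g i"
proof (cases "i = A")
  case True
  have "Z A * (p * inter M Y (E A)) = p * (Z A * inter M Zm (E A))"
    by (simp add: Yau_cycle_inter_E_A algebra_simps)
  also have "\<dots> = Z A * - kappa" using fund_A_times_Zmin_E_A fund_genus_eq by simp
  finally show ?thesis
    using True fund_cycle_coeff_pos[of A] mult_left_cancel[of "Z A" "p * inter M Y (E A)" "- kappa"]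
    by simp
next
  case False
  then show ?thesis by (simp add: Yau_cycle_inter_E_0 canon_0)
qed

lemma canonical_cycle_eq: "canonical_cycle M g = (\<lambda>i. of_int (p * Y i))"
proof (rule canonical_cycle_eqI)
  show "is_canonical_cycle M g (\<lambda>i. of_int (p * Y i))"
    unfolding is_canonical_cycle_def
  proof
    fix i
    have "(\<Sum>j\<in>UNIV. (of_int (p * Y j) :: rat) * of_int (M j i)) = of_int (p * inter M Y (E i))"
      by (simp add: inter_E_right sum_distrib_left mult.assoc)
    then show "(\<Sum>j\<in>UNIV. (of_int (p * Y j) :: rat) * of_int (M j i)) = - of_int (canon M g i)"
      by (simp add: genus_times_Yau_cycle_inter_E)
  qed
qed

end

theorem theorem3p5:
  fixes M :: "'i::finite \<Rightarrow> 'i \<Rightarrow> int" and g :: "'i \<Rightarrow> nat"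
    and ds :: "('i \<Rightarrow> int) list"
  assumes "exc_config M"
    and "minimal_resolution M g"
    and "pa M g (fund_cycle M) > 0"
    and "inter M (fund_cycle M) (fund_cycle M) = -2"
    and "ess_irreducible M g (fund_cycle M)"
    and "is_yau_seq M g ds"
    and "last ds = Zmin M g"
  shows "numerically_gorenstein M g \<and>
         canonical_cycle M g = (\<lambda>i. of_int (pa M g (fund_cycle M) * yau_cycle ds i))"
proof -
  interpret exceptional_set M by unfold_locales (fact assms(1))
  obtain A where "\<not> minus2_curve M g A" and "\<And>j. j \<noteq> A \<Longrightarrow> minus2_curve M g j"
    using ess_irreducible_fund_cycle[OF assms(5)] by metis
  then interpret degree_two_yau_sequence M g A ds
    using assms by unfold_locales simp_all
  show ?thesis by (simp add: canonical_cycle_eq numerically_gorenstein_def)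
qed

end
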